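(* For $n>1$ let $P_{2n}(x)=x^{2n}+x^{n+1}+x^n+x^{n-1}+1$. Then $\lim_{n\to\infty}C(P_{2n})=\frac{1}{\pi}\arccos\frac12=\frac13$.
   Context: For a polynomial $P$ of degree $d$, let $I(P)$ and $E(P)$ denote the numbers of complex zeros of $P$ (counted with multiplicity) of modulus $<1$ and $>1$ respectively, and $C(P)=\frac{I(P)+E(P)}{d}$. *)

theory Defs
  imports "HOL-Analysis.Analysis" "HOL-Computational_Algebra.Polynomial"
begin

definition inner_zeros :: "complex poly \<Rightarrow> nat" where
  "inner_zeros p = (\<Sum>z\<in>{z. poly p z = 0 \<and> cmod z < 1}. order z p)"

definition outer_zeros :: "complex poly \<Rightarrow> nat" where
  "outer_zeros p = (\<Sum>z\<in>{z. poly p z = 0 \<and> cmod z > 1}. order z p)"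

definition C_ratio :: "complex poly \<Rightarrow> real" where
  "C_ratio p = real (inner_zeros p + outer_zeros p) / real (degree p)"

definition P2n :: "nat \<Rightarrow> complex poly" where
  "P2n n = monom 1 (2*n) + monom 1 (n+1) + monom 1 n + monom 1 (n-1) + 1"

end

theory Submission
  imports Defs "HOL-Computational_Algebra.Fundamental_Theorem_Algebra"
begin

text \<open>
  Every zero of P lies inside, on or outside the unit circle, so C(P) = 1 - U / (2n), where U
  counts the zeros on the circle with multiplicity, and it suffices to show U = 4n/3 + O(1).
  On the circle, e^(-int) P(e^(it)) = 2 cos nt + 2 cos t + 1, whose zeros satisfy
  cos t \<le> 1/2, i.e. |t| \<ge> \<pi>/3. At the grid points t = k\<pi>/n with \<pi>/3 < |t| \<le> \<pi> this
  profile alternates in sign, which gives at least 4n/3 - 2 zeros. Conversely, a zero with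
  n |sin nt| > 1 ("steep") is simple, and two steep zeros in one cell [k\<pi>/n, (k+1)\<pi>/n)
  would enclose a critical point, where n |sin nt| \<le> 1. The remaining ("flat") zeros satisfy
  |cos t - 1/2| \<le> 1/n^2; on either side of 0 they lie in an interval of length 2/n^2 on which
  the second derivative of the profile has no zero, so there are at most two on each side,
  and each has multiplicity at most two.
\<close>

section \<open>Zeros inside, on and outside the unit circle\<close>

definition unimodular_zeros :: "complex poly \<Rightarrow> nat" where
  "unimodular_zeros p = (\<Sum>z\<in>{z. poly p z = 0 \<and> cmod z = 1}. order z p)"

lemma sum_order_roots_eq_degree:
  fixes p :: "complex poly"
  assumes "p \<noteq> 0"
  shows "(\<Sum>z | poly p z = 0. order z p) = degree p"
proof -
  have "degree p = size (proots p)" by (simp add: size_proots_complex)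
  also have "\<dots> = (\<Sum>z\<in>set_mset (proots p). count (proots p) z)"
    by (simp add: size_multiset_overloaded_eq)
  finally show ?thesis using assms by simp
qed

lemma zeros_inner_outer_unimodular:
  assumes "p \<noteq> 0"
  shows "inner_zeros p + outer_zeros p + unimodular_zeros p = degree p"
proof -
  let ?A = "{z. poly p z = 0 \<and> cmod z < 1}"
  let ?B = "{z. poly p z = 0 \<and> cmod z > 1}"
  let ?C = "{z. poly p z = 0 \<and> cmod z = 1}"
  have fin: "finite ?A" "finite ?B" "finite ?C"
    by (rule finite_subset[OF _ poly_roots_finite[OF assms]]; auto)+
  have split: "{z. poly p z = 0} = (?A \<union> ?B) \<union> ?C"
    by auto
  have "(\<Sum>z | poly p z = 0. order z p) = (\<Sum>z\<in>?A \<union> ?B. order z p) + (\<Sum>z\<in>?C. order z p)"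
    unfolding split using fin by (intro sum.union_disjoint) auto
  also have "(\<Sum>z\<in>?A \<union> ?B. order z p) = (\<Sum>z\<in>?A. order z p) + (\<Sum>z\<in>?B. order z p)"
    using fin by (intro sum.union_disjoint) auto
  finally show ?thesis
    using sum_order_roots_eq_degree[OF assms]
    by (simp add: inner_zeros_def outer_zeros_def unimodular_zeros_def)
qed

lemma C_ratio_eq_1_minus_unimodular:
  assumes "degree p > 0"
  shows "C_ratio p = 1 - unimodular_zeros p / degree p"
proof -
  have "p \<noteq> 0" using assms by auto
  then have "real (inner_zeros p + outer_zeros p) = real (degree p) - real (unimodular_zeros p)"
    using zeros_inner_outer_unimodular[of p] by (simp flip: of_nat_add)
  then show ?thesis
    using assms by (simp add: C_ratio_def diff_divide_distrib)
qed

lemma poly_funpow_pderiv_eq_0: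
  fixes p :: "'a::{idom,semiring_char_0} poly"
  assumes "p \<noteq> 0" "k < order z p"
  shows "poly ((pderiv ^^ k) p) z = 0"
  using assms
proof (induction k arbitrary: p)
  case 0
  then show ?case by (simp add: order_root)
next
  case (Suc k)
  have root: "poly p z = 0" using Suc.prems by (simp add: order_root)
  have "order z p = Suc (order z (pderiv p))"
    by (rule order_pderiv[OF Suc.prems(1) root])
  moreover have "pderiv p \<noteq> 0"
  proof
    assume "pderiv p = 0"
    then obtain c where "p = [:c:]" using pderiv_iszero by blast
    then show False using root Suc.prems(1) by simp
  qed
  ultimately show ?case
    using Suc.IH[of "pderiv p"] Suc.prems(2) by (simp add: funpow_Suc_right del: funpow.simps)
qed

lemma IVT_sign_change:
  fixes f :: "real \<Rightarrow> real"
  assumes "a \<le> b" "continuous_on {a..b} f" "f a * f b < 0"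
  obtains x where "a < x" "x < b" "f x = 0"
proof -
  have "\<exists>x. a \<le> x \<and> x \<le> b \<and> f x = 0"
  proof (cases "f a < 0")
    case True
    then have "0 \<le> f b" using assms(3) by (simp add: mult_less_0_iff)
    with True show ?thesis using assms(1,2) by (intro IVT') auto
  next
    case False
    then have "f b \<le> 0" using assms(3) by (simp add: mult_less_0_iff)
    with False show ?thesis using assms(1,2) by (intro IVT2') auto
  qed
  then obtain x where "a \<le> x" "x \<le> b" "f x = 0" by blast
  moreover have "x \<noteq> a" "x \<noteq> b" using \<open>f x = 0\<close> assms(3) by auto
  ultimately show ?thesis using that by (auto simp: order.order_iff_strict)
qed

lemma cos_diff_le_abs: "cos y - cos x \<le> \<bar>y - x\<bar>" for x y :: real
proof -
  have "cos y - cos x = 2 * sin ((y + x) / 2) * sin ((x - y) / 2)"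
    by (rule cos_diff_cos)
  also have "\<dots> \<le> 2 * \<bar>sin ((x - y) / 2)\<bar>"
  proof -
    have "\<bar>sin ((y + x) / 2) * sin ((x - y) / 2)\<bar> \<le> \<bar>sin ((x - y) / 2)\<bar>"
      by (simp add: abs_mult mult_left_le_one_le)
    then show ?thesis by linarith
  qed
  also have "\<dots> \<le> \<bar>y - x\<bar>"
    using abs_sin_x_le_abs_x[of "(x - y) / 2"] by simp
  finally show ?thesis .
qed

lemma sin_ge_min_endpoints:
  fixes a b x :: real
  assumes "0 \<le> a" "a \<le> x" "x \<le> b" "b \<le> pi"
  shows "min (sin a) (sin b) \<le> sin x"
proof (cases "x \<le> pi/2")
  case True
  then have "sin a \<le> sin x" using assms by (intro sin_monotone_2pi_le) auto
  then show ?thesis by simp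
next
  case False
  have "sin (pi - b) \<le> sin (pi - x)" using assms False by (intro sin_monotone_2pi_le) auto
  then show ?thesis by simp
qed

lemma abs_sin_ge_min_in_cell:
  fixes a b x :: real
  assumes "\<lfloor>a/pi\<rfloor> = \<lfloor>b/pi\<rfloor>" "a \<le> x" "x \<le> b"
  shows "min \<bar>sin a\<bar> \<bar>sin b\<bar> \<le> \<bar>sin x\<bar>"
proof -
  define k where "k = \<lfloor>a/pi\<rfloor>"
  have shift: "\<bar>sin (y - k*pi)\<bar> = \<bar>sin y\<bar>" for y
    by (simp add: sin_diff abs_mult mult.commute[of _ pi])
  have cell: "0 \<le> y - k*pi" "y - k*pi \<le> pi" if "\<lfloor>y/pi\<rfloor> = k" for y
  proof -
    have "k \<le> y/pi" "y/pi < k + 1" using that by linarith+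
    then show "0 \<le> y - k*pi" "y - k*pi \<le> pi" by (simp_all add: field_simps)
  qed
  have a: "0 \<le> a - k*pi" "a - k*pi \<le> pi" and b: "0 \<le> b - k*pi" "b - k*pi \<le> pi"
    using cell[of a] cell[of b] assms(1) by (auto simp: k_def)
  have "min (sin (a - k*pi)) (sin (b - k*pi)) \<le> sin (x - k*pi)"
    using a b assms by (intro sin_ge_min_endpoints) auto
  moreover have "sin (a - k*pi) = \<bar>sin a\<bar>" "sin (b - k*pi) = \<bar>sin b\<bar>"
    using shift[of a] shift[of b] sin_ge_zero[OF a] sin_ge_zero[OF b] by simp_all
  ultimately show ?thesis using shift[of x] by linarith
qed

lemma abs_ge_pi_div_3_if_cos_le_half:
  fixes t :: real
  assumes "\<bar>t\<bar> \<le> pi" "cos t \<le> 1/2"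
  shows "pi/3 \<le> \<bar>t\<bar>"
proof (rule ccontr)
  assume "\<not> pi/3 \<le> \<bar>t\<bar>"
  then have "cos (pi/3) < cos \<bar>t\<bar>" by (subst cos_mono_less_eq) auto
  then show False using assms(2) by (simp add: cos_60)
qed

lemma square_ge_16:
  assumes "n \<ge> 4"
  shows "16 \<le> (real n)^2" "1/(real n)^2 \<le> 1/16"
proof -
  have "(4::real)^2 \<le> (real n)^2" using assms by (intro power_mono) auto
  then show "16 \<le> (real n)^2" by simp
  then show "1/(real n)^2 \<le> 1/16" by (intro divide_left_mono) (use assms in auto)
qed

lemma card_le_2_if_no_increasing_triple:
  fixes S :: "'a::linorder set"
  assumes "\<And>a b c. \<lbrakk>a \<in> S; b \<in> S; c \<in> S; a < b; b < c\<rbrakk> \<Longrightarrow> False"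
  shows "card S \<le> 2"
proof (rule ccontr)
  assume "\<not> card S \<le> 2"
  then obtain T where T: "T \<subseteq> S" "card T = 3"
    by (metis not_less_eq_eq numeral_2_eq_2 numeral_3_eq_3 obtain_subset_with_card_n)
  then obtain x y z where xyz: "T = {x, y, z}" "x \<noteq> y" "x \<noteq> z" "y \<noteq> z"
    by (auto simp: card_3_iff)
  then have "x \<in> S" "y \<in> S" "z \<in> S" using T by auto
  with xyz(2-4) show False
    using assms by (cases "x < y"; cases "y < z"; cases "x < z") (auto simp: not_less_iff_gr_or_eq)
qed

lemma cos_eq_cis: "complex_of_real (cos x) = (cis x + cis (-x)) / 2"
  by (simp add: complex_eq_iff)

lemma sin_eq_cis: "complex_of_real (sin x) = (cis x - cis (-x)) / (2 * \<i>)"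
proof -
  have "cis x - cis (-x) = 2 * \<i> * sin x" by (simp add: complex_eq_iff)
  then show ?thesis by simp
qed

section \<open>The polynomial on the unit circle\<close>

lemma degree_P2n: assumes "n \<ge> 2" shows "degree (P2n n) = 2*n"
proof -
  have low: "degree (monom (1::complex) (n+1) + monom 1 n + monom 1 (n-1) + 1) \<le> n+1"
    by (intro degree_add_le) (auto simp: degree_monom_eq)
  have "P2n n = monom 1 (2*n) + (monom 1 (n+1) + monom 1 n + monom 1 (n-1) + 1)"
    unfolding P2n_def by (simp add: add.assoc)
  also have "degree \<dots> = 2*n"
    using low assms by (subst degree_add_eq_left) (auto simp: degree_monom_eq)
  finally show ?thesis .
qed

lemma P2n_nonzero: "n \<ge> 2 \<Longrightarrow> P2n n \<noteq> 0"
  using degree_P2n[of n] by auto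

definition P2n_cos :: "nat \<Rightarrow> real \<Rightarrow> real" where
  "P2n_cos n t = 2 * cos (real n * t) + 2 * cos t + 1"

lemma poly_P2n_cis:
  assumes "n \<ge> 1"
  shows "poly (P2n n) (cis t) = cis (real n * t) * P2n_cos n t"
proof -
  obtain m where n: "n = Suc m" using assms by (cases n) auto
  have "poly (P2n n) (cis t) = cis (2*n*t) + cis ((n+1)*t) + cis (real n * t) + cis ((n-1)*t) + 1"
    by (simp add: P2n_def n poly_monom Complex.DeMoivre cis_mult algebra_simps)
  also have "\<dots> = cis (real n * t) * (cis (real n * t) + cis (-(real n * t)) + cis t + cis (-t) + 1)"
    using assms by (simp add: distrib_left cis_mult algebra_simps)
  also have "\<dots> = cis (real n * t) * P2n_cos n t"
    by (simp add: P2n_cos_def cos_eq_cis add_divide_distrib)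
  finally show ?thesis .
qed

text \<open>
  The left-hand sides below are (z d/dz - n) P and (z d/dz - n)^2 P at z = cis t. Since
  d/dt = i z d/dz there and P(cis t) = cis(nt) f(t) with f = P2n_cos n, they equal
  -i cis(nt) f'(t) and -cis(nt) f''(t): a double zero on the circle is a critical point of f,
  a triple zero an inflection point.
\<close>

lemma P2n_cis_pderiv:
  assumes "n \<ge> 2"
  shows "cis t * poly (pderiv (P2n n)) (cis t) - n * poly (P2n n) (cis t)
     = 2 * \<i> * cis (real n * t) * complex_of_real (real n * sin (real n * t) + sin t)"
proof -
  obtain m where n: "n = m+2" using assms by (metis add.commute le_Suc_ex)
  define z where "z = cis t"
  define u where "u = cis (m * t)"
  have z0: "z \<noteq> 0" and u0: "u \<noteq> 0" by (auto simp: z_def u_def)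
  have zk: "cis t ^ k = z^k" for k by (simp add: z_def)
  have um: "z^m = u" by (simp add: z_def u_def Complex.DeMoivre)
  have w: "cis (real n * t) = u*z^2" unfolding n um[symmetric] z_def
    by (simp only: Complex.DeMoivre cis_mult) (simp add: algebra_simps)
  have wi: "cis (-(real n * t)) = inverse (u*z^2)" by (simp add: w[symmetric] cis_inverse)
  have zi: "cis (-t) = inverse z" by (simp add: z_def cis_inverse)
  have um2: "z^(m*2) = u*u" by (metis um power_add mult_2_right)
  show ?thesis
    unfolding of_real_add of_real_mult sin_eq_cis w wi zi
    unfolding P2n_def n
    apply (simp add: pderiv_add pderiv_monom poly_monom zk z_def[symmetric] del: of_nat_Suc)
    apply (simp add: um um2 power_add field_simps z0 u0)
    apply (simp add: algebra_simps eval_nat_numeral)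
    done
qed

lemma P2n_cis_pderiv2:
  assumes "n \<ge> 3"
  shows "(cis t)^2 * poly (pderiv (pderiv (P2n n))) (cis t) + cis t * poly (pderiv (P2n n)) (cis t)
     - 2 * n * cis t * poly (pderiv (P2n n)) (cis t) + n^2 * poly (P2n n) (cis t)
     = 2 * cis (real n * t) * complex_of_real ((real n)^2 * cos (real n * t) + cos t)"
proof -
  obtain m where n: "n = m+3" using assms by (metis add.commute le_Suc_ex)
  define z where "z = cis t"
  define u where "u = cis (m * t)"
  have z0: "z \<noteq> 0" and u0: "u \<noteq> 0" by (auto simp: z_def u_def)
  have zk: "cis t ^ k = z^k" for k by (simp add: z_def)
  have um: "z^m = u" by (simp add: z_def u_def Complex.DeMoivre)
  have w: "cis (real n * t) = u*z^3" unfolding n um[symmetric] z_def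
    by (simp only: Complex.DeMoivre cis_mult) (simp add: algebra_simps)
  have wi: "cis (-(real n * t)) = inverse (u*z^3)" by (simp add: w[symmetric] cis_inverse)
  have zi: "cis (-t) = inverse z" by (simp add: z_def cis_inverse)
  have um2: "z^(m*2) = u*u" by (metis um power_add mult_2_right)
  show ?thesis
    unfolding of_real_add of_real_mult cos_eq_cis w wi zi
    unfolding P2n_def n
    apply (simp add: pderiv_add pderiv_monom poly_monom zk z_def[symmetric] del: of_nat_Suc)
    apply (simp add: um um2 power_add field_simps z0 u0)
    apply (simp add: algebra_simps eval_nat_numeral)
    done
qed

lemma critical_if_order_P2n_cis_ge_2:
  assumes "n \<ge> 2" "order (cis t) (P2n n) \<ge> 2"
  shows "real n * sin (real n * t) + sin t = 0"
proof -
  have "poly (P2n n) (cis t) = 0" "poly (pderiv (P2n n)) (cis t) = 0"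
    using poly_funpow_pderiv_eq_0[of "P2n n" 0 "cis t"] poly_funpow_pderiv_eq_0[of "P2n n" 1 "cis t"]
      assms P2n_nonzero by auto
  then show ?thesis
    using P2n_cis_pderiv[OF assms(1), of t] by (simp del: of_real_add of_real_mult)
qed

lemma inflection_if_order_P2n_cis_ge_3:
  assumes "n \<ge> 3" "order (cis t) (P2n n) \<ge> 3"
  shows "(real n)^2 * cos (real n * t) + cos t = 0"
proof -
  have "poly ((pderiv ^^ k) (P2n n)) (cis t) = 0" if "k < 3" for k
    using poly_funpow_pderiv_eq_0[of "P2n n" k "cis t"] assms that P2n_nonzero by auto
  from this[of 0] this[of 1] this[of 2] show ?thesis
    using P2n_cis_pderiv2[OF assms(1), of t] by (simp add: numeral_2_eq_2 del: of_real_add of_real_mult)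
qed

definition P2n_angles :: "nat \<Rightarrow> real set" where
  "P2n_angles n = {t \<in> {-pi<..pi}. P2n_cos n t = 0}"

lemma inj_on_cis_P2n_angles: "inj_on cis (P2n_angles n)"
  by (rule inj_on_inverseI[of _ Arg]) (simp add: P2n_angles_def Arg_cis)

lemma unimodular_roots_P2n:
  assumes "n \<ge> 1"
  shows "{z. poly (P2n n) z = 0 \<and> cmod z = 1} = cis ` P2n_angles n"
proof (intro equalityI subsetI)
  fix z assume z: "z \<in> {z. poly (P2n n) z = 0 \<and> cmod z = 1}"
  then have "z \<noteq> 0" by auto
  with z have "cis (Arg z) = z" using cis_Arg[of z] by (simp add: sgn_eq)
  moreover have "Arg z \<in> {-pi<..pi}" using Arg_bounded[of z] by simp
  ultimately show "z \<in> cis ` P2n_angles n"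
    using z poly_P2n_cis[OF assms, of "Arg z"] by (force simp: P2n_angles_def)
qed (use poly_P2n_cis[OF assms] in \<open>auto simp: P2n_angles_def\<close>)

lemma finite_P2n_angles:
  assumes "n \<ge> 2"
  shows "finite (P2n_angles n)"
proof -
  have "finite {z. poly (P2n n) z = 0 \<and> cmod z = 1}"
    using poly_roots_finite[OF P2n_nonzero[OF assms]] by (rule finite_subset[rotated]) auto
  then show ?thesis
    using unimodular_roots_P2n[of n] assms finite_image_iff[OF inj_on_cis_P2n_angles] by simp
qed

lemma unimodular_zeros_P2n:
  assumes "n \<ge> 1"
  shows "unimodular_zeros (P2n n) = (\<Sum>t\<in>P2n_angles n. order (cis t) (P2n n))"
  unfolding unimodular_zeros_def unimodular_roots_P2n[OF assms]
  by (rule sum.reindex[OF inj_on_cis_P2n_angles, unfolded comp_def])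

lemma order_P2n_cis_pos:
  assumes "n \<ge> 2" "t \<in> P2n_angles n"
  shows "1 \<le> order (cis t) (P2n n)"
  using assms poly_P2n_cis[of n t] order_gt_0_iff[OF P2n_nonzero[OF assms(1)]]
  by (simp add: P2n_angles_def Suc_le_eq)

section \<open>Zeros of the real profile\<close>

lemma P2n_cos_minus: "P2n_cos n (-t) = P2n_cos n t"
  by (simp add: P2n_cos_def)

lemma cos_le_half_if_P2n_cos_eq_0: "P2n_cos n t = 0 \<Longrightarrow> cos t \<le> 1/2"
  using cos_ge_minus_one[of "n*t"] unfolding P2n_cos_def by linarith

lemma P2n_cos_critical_between:
  fixes a b :: real
  assumes "a < b" "P2n_cos n a = 0" "P2n_cos n b = 0"
  obtains x :: real where "a < x" "x < b" "real n * sin (real n * x) + sin x = 0"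
proof -
  have "(P2n_cos n has_real_derivative - 2 * (real n * sin (real n * x) + sin x)) (at x)" for x :: real
    unfolding P2n_cos_def by (auto intro!: derivative_eq_intros)
  from MVT2[OF assms(1) this] obtain x :: real where "a < x" "x < b"
    "P2n_cos n b - P2n_cos n a = (b - a) * (- 2 * (real n * sin (real n * x) + sin x))" by blast
  with assms that show ?thesis by simp
qed

lemma P2n_cos_inflection_between:
  fixes a b :: real
  assumes "a < b" "real n * sin (real n * a) + sin a = 0" "real n * sin (real n * b) + sin b = 0"
  obtains y :: real where "a < y" "y < b" "(real n)^2 * cos (real n * y) + cos y = 0"
proof -
  have "((\<lambda>x::real. real n * sin (real n * x) + sin x)
      has_real_derivative (real n)^2 * cos (real n * y) + cos y) (at y)" for y :: real
    by (auto intro!: derivative_eq_intros simp: power2_eq_square)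
  from MVT2[OF assms(1) this] obtain y :: real where "a < y" "y < b"
    "(real n * sin (real n * b) + sin b) - (real n * sin (real n * a) + sin a)
      = (b - a) * ((real n)^2 * cos (real n * y) + cos y)" by blast
  with assms that show ?thesis by simp
qed

lemma flat_if_critical:
  assumes "real n * sin (real n * x) + sin x = 0"
  shows "real n * \<bar>sin (real n * x)\<bar> \<le> 1"
proof -
  have "real n * sin (real n * x) = - sin x" using assms by linarith
  then have "real n * \<bar>sin (real n * x)\<bar> = \<bar>sin x\<bar>"
    by (metis abs_minus abs_mult abs_of_nat)
  then show ?thesis using abs_sin_le_one[of x] by linarith
qed

lemma P2n_cos_grid_sign:
  assumes "real n < 3 * real j" "j \<le> n"
  shows "if even j then P2n_cos n (j * pi / n) > 0 else P2n_cos n (j * pi / n) < 0"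
proof -
  have n: "real n > 0" using assms by linarith
  have "pi/3 < j*pi/n" "j*pi/n \<le> pi" using assms n by (simp_all add: field_simps)
  then have "cos (j*pi/n) < cos (pi/3)" by (subst cos_mono_less_eq) auto
  then have "\<bar>2 * cos (j*pi/n) + 1\<bar> < 2"
    unfolding abs_less_iff cos_60 using cos_ge_minus_one[of "j*pi/n"] by linarith
  moreover have "cos (n * (j*pi/n)) = (-1)^j" using n by simp
  ultimately show ?thesis
    by (auto simp: P2n_cos_def)
qed

lemma P2n_cos_zero_in_cell:
  assumes "real n < 3 * real k" "k < n"
  obtains t where "k*pi/n < t" "t < (real k + 1)*pi/n" "P2n_cos n t = 0"
proof (rule IVT_sign_change[of "k*pi/n" "(real k + 1)*pi/n" "P2n_cos n"])
  show "P2n_cos n (k*pi/n) * P2n_cos n ((real k + 1)*pi/n) < 0"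
    using P2n_cos_grid_sign[of n k] P2n_cos_grid_sign[of n "k+1"] assms
    by (cases "even k") (auto simp: mult_pos_neg mult_neg_pos add.commute)
  show "continuous_on {k*pi/n..(real k + 1)*pi/n} (P2n_cos n)"
    unfolding P2n_cos_def by (intro continuous_intros)
qed (use that in \<open>auto simp: divide_right_mono\<close>)

definition angle_cell :: "nat \<Rightarrow> real \<Rightarrow> int" where
  "angle_cell n t = \<lfloor>n * t / pi\<rfloor>"

lemma angle_cell_eqI:
  assumes "n > 0" "k * pi / n \<le> t" "t < (k + 1) * pi / n"
  shows "angle_cell n t = k"
  unfolding angle_cell_def using assms by (intro floor_unique) (simp_all add: field_simps)

lemma card_P2n_angles_ge:
  assumes "n \<ge> 2"
  shows "4 * real n / 3 - 2 \<le> card (P2n_angles n)"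
proof -
  let ?K = "{n div 3 + 1..<n}"
  have n: "real n > 0" using assms by simp
  have cells: "int k \<in> angle_cell n ` P2n_angles n" "- int k - 1 \<in> angle_cell n ` P2n_angles n"
    if "k \<in> ?K" for k
  proof -
    have "real n < 3 * real k" "k < n" using that by auto
    then obtain t where t: "k*pi/n < t" "t < (real k + 1)*pi/n" "P2n_cos n t = 0"
      by (rule P2n_cos_zero_in_cell)
    have "(real k + 1) * pi \<le> n * pi" using \<open>k < n\<close> by (intro mult_right_mono) auto
    then have "(real k + 1)*pi/n \<le> pi" using n by (simp add: divide_le_eq)
    moreover have "0 < t" by (rule le_less_trans[OF _ t(1)]) simp
    ultimately have "t \<in> P2n_angles n" "-t \<in> P2n_angles n"
      using t by (auto simp: P2n_angles_def P2n_cos_minus)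
    moreover have "angle_cell n t = int k"
      by (rule angle_cell_eqI) (use t n in auto)
    moreover have "angle_cell n (-t) = - int k - 1"
      by (rule angle_cell_eqI) (use t n in \<open>auto simp: field_simps\<close>)
    ultimately show "int k \<in> angle_cell n ` P2n_angles n" "- int k - 1 \<in> angle_cell n ` P2n_angles n"
      by (metis image_eqI)+
  qed
  have "2 * card ?K = card (int ` ?K \<union> (\<lambda>k. - int k - 1) ` ?K)"
    by (subst card_Un_disjoint) (auto simp: card_image inj_on_def)
  also have "\<dots> \<le> card (angle_cell n ` P2n_angles n)"
    using cells finite_P2n_angles[OF assms] by (intro card_mono) auto
  also have "\<dots> \<le> card (P2n_angles n)"
    by (rule card_image_le[OF finite_P2n_angles[OF assms]])
  finally have "2 * (n - (n div 3 + 1)) \<le> card (P2n_angles n)" by simp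
  moreover have "3 * (n div 3) \<le> n" by simp
  ultimately show ?thesis using assms by linarith
qed

lemma inj_on_angle_cell_steep_zeros:
  assumes "n > 0"
  shows "inj_on (angle_cell n) {t. P2n_cos n t = 0 \<and> 1 < real n * \<bar>sin (real n * t)\<bar>}"
proof (rule linorder_inj_onI')
  fix t1 t2 :: real
  assume t1: "t1 \<in> {t. P2n_cos n t = 0 \<and> 1 < real n * \<bar>sin (real n * t)\<bar>}"
    and t2: "t2 \<in> {t. P2n_cos n t = 0 \<and> 1 < real n * \<bar>sin (real n * t)\<bar>}" and "t1 < t2"
  show "angle_cell n t1 \<noteq> angle_cell n t2"
  proof
    assume cell: "angle_cell n t1 = angle_cell n t2"
    have "P2n_cos n t1 = 0" "P2n_cos n t2 = 0" using t1 t2 by auto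
    then obtain x :: real where x: "t1 < x" "x < t2" "real n * sin (real n * x) + sin x = 0"
      by (rule P2n_cos_critical_between[OF \<open>t1 < t2\<close>])
    have flat: "real n * \<bar>sin (real n * x)\<bar> \<le> 1" using x(3) by (rule flat_if_critical)
    have "n * t1 \<le> n * x" "n * x \<le> n * t2" using x by (simp_all add: mult_left_mono)
    then have "min \<bar>sin (real n * t1)\<bar> \<bar>sin (real n * t2)\<bar> \<le> \<bar>sin (real n * x)\<bar>"
      using cell by (intro abs_sin_ge_min_in_cell) (simp_all add: angle_cell_def)
    then have "real n * min \<bar>sin (real n * t1)\<bar> \<bar>sin (real n * t2)\<bar>
        \<le> real n * \<bar>sin (real n * x)\<bar>"
      by (rule mult_left_mono) simp
    moreover have "1 < real n * min \<bar>sin (real n * t1)\<bar> \<bar>sin (real n * t2)\<bar>"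
      using t1 t2 by (simp add: min_def)
    ultimately show False using flat by linarith
  qed
qed

lemma card_steep_P2n_angles_le:
  assumes "n \<ge> 2"
  shows "card {t \<in> P2n_angles n. 1 < real n * \<bar>sin (real n * t)\<bar>} \<le> 4 * real n / 3 + 4"
proof -
  let ?S = "{t \<in> P2n_angles n. 1 < real n * \<bar>sin (real n * t)\<bar>}"
  define q where "q = int (n div 3)"
  have n: "real n > 0" using assms by simp
  have "angle_cell n ` ?S \<subseteq> {q..n} \<union> {-n..-q}"
  proof
    fix k assume "k \<in> angle_cell n ` ?S"
    then obtain t :: real where t: "-pi < t" "t \<le> pi" "P2n_cos n t = 0" and k: "k = \<lfloor>n * t / pi\<rfloor>"
      by (auto simp: P2n_angles_def angle_cell_def)
    have "pi/3 \<le> \<bar>t\<bar>"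
      using t by (intro abs_ge_pi_div_3_if_cos_le_half cos_le_half_if_P2n_cos_eq_0) auto
    have q: "real_of_int q \<le> n / 3" unfolding q_def by linarith
    show "k \<in> {q..n} \<union> {-n..-q}"
    proof (cases "t \<ge> 0")
      case True
      then have "pi/3 \<le> t" using \<open>pi/3 \<le> \<bar>t\<bar>\<close> by simp
      then have "n * (pi/3) \<le> n * t" "n * t \<le> n * pi"
        using t(2) by (intro mult_left_mono; simp)+
      then have "n / 3 \<le> n * t / pi" "n * t / pi \<le> n"
        by (simp_all add: field_simps)
      then have "q \<le> k" "k \<le> n" using q unfolding k by linarith+
      then show ?thesis by simp
    next
      case False
      then have "t \<le> -pi/3" using \<open>pi/3 \<le> \<bar>t\<bar>\<close> by simp
      then have "n * t \<le> n * (-pi/3)" "n * (-pi) < n * t"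
        using t(1) n by (intro mult_left_mono mult_strict_left_mono; simp)+
      then have "n * t / pi \<le> - n / 3" "- n < n * t / pi"
        by (simp_all add: field_simps)
      then have "k \<le> -q" "-n \<le> k" using q unfolding k by linarith+
      then show ?thesis by simp
    qed
  qed
  then have "card (angle_cell n ` ?S) \<le> card ({q..n} \<union> {-n..-q})"
    by (intro card_mono) auto
  also have "\<dots> \<le> card {q..int n} + card {-int n..-q}"
    by (rule card_Un_le)
  finally have "card (angle_cell n ` ?S) \<le> 2 * (n - q + 1)"
    unfolding q_def by simp
  moreover have "inj_on (angle_cell n) ?S"
    using assms by (intro inj_on_subset[OF inj_on_angle_cell_steep_zeros]) (auto simp: P2n_angles_def)
  ultimately have "card ?S \<le> 2 * (n - q + 1)"
    by (simp add: card_image)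
  moreover have "n \<le> 3 * q + 2" unfolding q_def by linarith
  ultimately have "3 * int (card ?S) \<le> 4 * int n + 10"
    by (smt (verit))
  then have "real_of_int (3 * int (card ?S)) \<le> real_of_int (4 * int n + 10)"
    by (simp only: of_int_le_iff)
  then show ?thesis by simp
qed

lemma flat_P2n_cos_zero_bounds:
  assumes "n \<ge> 4" "P2n_cos n t = 0" "real n * \<bar>sin (real n * t)\<bar> \<le> 1"
  shows "cos (real n * t) \<le> -3/4" "1/2 - 1/(real n)^2 \<le> cos t"
proof -
  let ?c = "cos (real n * t)" and ?e = "1/(real n)^2"
  have e: "?e \<le> 1/16" using square_ge_16[OF assms(1)] by simp
  have "\<bar>sin (real n * t)\<bar> \<le> 1 / real n" using assms(1,3) by (simp add: field_simps)
  then have "(sin (real n * t))^2 \<le> ?e"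
    by (metis abs_ge_zero power2_abs power_mono power_one_over)
  then have c2: "1 - ?e \<le> ?c^2" using sin_cos_squared_add[of "real n * t"] by linarith
  have root: "2 * ?c = - 2 * cos t - 1" using assms(2) unfolding P2n_cos_def by linarith
  show c: "?c \<le> -3/4"
  proof (rule ccontr)
    assume "\<not> ?c \<le> -3/4"
    then have "\<bar>?c\<bar> < 3/4" using root cos_ge_minus_one[of t] by linarith
    then have "?c^2 < (3/4)^2" by (metis abs_ge_zero power2_abs power_strict_mono zero_less_numeral)
    then have "?c^2 < 9/16" by (simp add: power_divide)
    then show False using c2 e by linarith
  qed
  have "(1 - ?e)^2 \<le> 1 - ?e"
    using e by (simp add: power2_eq_square mult_left_le_one_le)
  then have "\<bar>1 - ?e\<bar> \<le> \<bar>?c\<bar>" using c2 by (simp add: abs_le_square_iff)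
  then have "1 - ?e \<le> - ?c" using c e by linarith
  then show "1/2 - ?e \<le> cos t" using root by linarith
qed

lemma flat_P2n_cos_zeros_close:
  assumes "n \<ge> 4" "0 < a" "a < c" "c < pi"
    and "P2n_cos n a = 0" "real n * \<bar>sin (real n * a)\<bar> \<le> 1"
    and "P2n_cos n c = 0" "real n * \<bar>sin (real n * c)\<bar> \<le> 1"
  shows "c - a \<le> 2 / (real n)^2"
proof -
  have e: "1/(real n)^2 \<le> 1/16" using square_ge_16[OF assms(1)] by simp
  have ca: "cos a \<le> 1/2" using assms(5) by (rule cos_le_half_if_P2n_cos_eq_0)
  have cc: "1/2 - 1/(real n)^2 \<le> cos c" using flat_P2n_cos_zero_bounds(2)[OF assms(1,7,8)] .
  obtain \<xi> :: real where \<xi>: "a < \<xi>" "\<xi> < c" "cos c - cos a = (c - a) * - sin \<xi>"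
    using MVT2[OF assms(3) DERIV_cos] by blast
  have "cos c \<le> cos \<xi>" "cos \<xi> \<le> cos a" using \<xi> assms(2-4) by (simp_all add: cos_mono_le_eq)
  then have "0 \<le> cos \<xi>" "cos \<xi> \<le> 1/2" using ca cc e by linarith+
  then have "(cos \<xi>)^2 \<le> (1/2)^2" by (intro power_mono)
  then have "(cos \<xi>)^2 \<le> 1/4" by (simp add: power_divide)
  then have "1/4 \<le> (sin \<xi>)^2" using sin_cos_squared_add[of \<xi>] by linarith
  then have "(1/2)^2 \<le> (sin \<xi>)^2" by (simp add: power_divide)
  then have "1/2 \<le> \<bar>sin \<xi>\<bar>" by (simp add: abs_le_square_iff[symmetric])
  moreover have "0 < sin \<xi>" using \<xi> assms(2-4) by (intro sin_gt_zero) auto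
  ultimately have "(c - a) * (1/2) \<le> (c - a) * sin \<xi>"
    using assms(3) by (intro mult_left_mono) auto
  also have "\<dots> \<le> 1/(real n)^2" using \<xi>(3) ca cc by simp
  finally show ?thesis by simp
qed

lemma no_three_flat_P2n_cos_zeros:
  assumes "n \<ge> 4" "0 < a" "a < b" "b < c" "c < pi"
    and "P2n_cos n a = 0" "P2n_cos n b = 0" "P2n_cos n c = 0"
    and "real n * \<bar>sin (real n * a)\<bar> \<le> 1" "real n * \<bar>sin (real n * c)\<bar> \<le> 1"
  shows False
proof -
  have n: "real n \<ge> 4" using assms(1) by simp
  obtain x1 :: real where x1: "a < x1" "x1 < b" "real n * sin (real n * x1) + sin x1 = 0"
    using assms(3,6,7) by (rule P2n_cos_critical_between)
  obtain x2 :: real where x2: "b < x2" "x2 < c" "real n * sin (real n * x2) + sin x2 = 0"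
    using assms(4,7,8) by (rule P2n_cos_critical_between)
  obtain y :: real where y: "x1 < y" "y < x2" "(real n)^2 * cos (real n * y) + cos y = 0"
    using x1(3) x2(3) by (rule P2n_cos_inflection_between[of x1 x2, OF order.strict_trans[OF x1(2) x2(1)]])
  have "cos (real n * y) - cos (real n * a) \<le> \<bar>real n * y - real n * a\<bar>"
    by (rule cos_diff_le_abs)
  also have "\<dots> = real n * (y - a)" using x1 y by (simp add: right_diff_distrib[symmetric] abs_mult)
  also have "\<dots> \<le> real n * (2 / (real n)^2)"
    using flat_P2n_cos_zeros_close[OF assms(1,2) _ assms(5,6,9,8,10)] assms(3,4) x1 x2 y
    by (intro mult_left_mono) auto
  also have "\<dots> \<le> 1/2" using n by (simp add: power2_eq_square field_simps)
  finally have "cos (real n * y) \<le> -1/4"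
    using flat_P2n_cos_zero_bounds(1)[OF assms(1,6,9)] by linarith
  then have "(real n)^2 * cos (real n * y) \<le> (real n)^2 * (-1/4)" by (intro mult_left_mono) auto
  moreover have "16 \<le> (real n)^2" by (rule square_ge_16[OF assms(1)])
  ultimately show False using y(3) cos_le_one[of y] by linarith
qed

lemma card_flat_P2n_angles_le:
  assumes "n \<ge> 4"
  shows "card {t \<in> P2n_angles n. real n * \<bar>sin (real n * t)\<bar> \<le> 1} \<le> 4"
proof -
  let ?F = "{t \<in> P2n_angles n. real n * \<bar>sin (real n * t)\<bar> \<le> 1}"
  define B where "B = {t \<in> ?F. 0 < t}"
  have pos: "0 < cos t" if "t \<in> ?F" for t
    using that flat_P2n_cos_zero_bounds(2)[OF assms, of t] square_ge_16(2)[OF assms]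
    by (auto simp: P2n_angles_def)
  have "?F \<subseteq> B \<union> uminus ` B"
  proof
    fix t assume t: "t \<in> ?F"
    have "t \<noteq> 0" using t by (auto simp: P2n_angles_def P2n_cos_def)
    moreover have "-t \<in> ?F" if "t < 0"
      using t that by (auto simp: P2n_angles_def P2n_cos_minus)
    ultimately show "t \<in> B \<union> uminus ` B"
      using t by (cases "0 < t") (auto simp: B_def image_iff intro!: bexI[of _ "-t"])
  qed
  moreover have "card B \<le> 2"
  proof (rule card_le_2_if_no_increasing_triple)
    fix a b c assume "a \<in> B" "b \<in> B" "c \<in> B" "a < b" "b < c"
    moreover have "c \<noteq> pi" using pos[of c] \<open>c \<in> B\<close> by (auto simp: B_def)
    ultimately show False
      using no_three_flat_P2n_cos_zeros[OF assms, of a b c] by (auto simp: B_def P2n_angles_def)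
  qed
  moreover have "finite B" using finite_P2n_angles[of n] assms by (auto simp: B_def)
  ultimately have "card ?F \<le> card B + card (uminus ` B)"
    by (meson card_Un_le card_mono finite_UnI finite_imageI order_trans)
  also have "\<dots> \<le> 4"
    using \<open>card B \<le> 2\<close> card_image_le[OF \<open>finite B\<close>, of uminus] by linarith
  finally show ?thesis .
qed

section \<open>Counting the unimodular zeros\<close>

lemma order_P2n_cis_le_1_if_steep:
  assumes "n \<ge> 2" "1 < real n * \<bar>sin (real n * t)\<bar>"
  shows "order (cis t) (P2n n) \<le> 1"
  using critical_if_order_P2n_cis_ge_2[OF assms(1), of t] flat_if_critical[of n t] assms(2) by linarith

lemma order_P2n_cis_le_2_if_flat:
  assumes "n \<ge> 4" "P2n_cos n t = 0" "real n * \<bar>sin (real n * t)\<bar> \<le> 1"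
  shows "order (cis t) (P2n n) \<le> 2"
proof (rule ccontr)
  assume "\<not> ?thesis"
  then have "(real n)^2 * cos (real n * t) + cos t = 0"
    using assms(1) by (intro inflection_if_order_P2n_cis_ge_3) auto
  moreover have "(real n)^2 * cos (real n * t) \<le> (real n)^2 * (-3/4)"
    using flat_P2n_cos_zero_bounds(1)[OF assms] by (intro mult_left_mono) auto
  moreover have "16 \<le> (real n)^2" by (rule square_ge_16[OF assms(1)])
  ultimately show False using cos_le_one[of t] by linarith
qed

lemma unimodular_zeros_P2n_bounds:
  assumes "n \<ge> 4"
  shows "4 * real n / 3 - 2 \<le> unimodular_zeros (P2n n)"
    and "unimodular_zeros (P2n n) \<le> 4 * real n / 3 + 12"
proof -
  let ?ord = "\<lambda>t. order (cis t) (P2n n)"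
  let ?S = "{t \<in> P2n_angles n. 1 < real n * \<bar>sin (real n * t)\<bar>}"
  let ?F = "{t \<in> P2n_angles n. real n * \<bar>sin (real n * t)\<bar> \<le> 1}"
  have fin: "finite (P2n_angles n)" using assms by (intro finite_P2n_angles) auto
  have U: "unimodular_zeros (P2n n) = sum ?ord (P2n_angles n)"
    using assms by (intro unimodular_zeros_P2n) auto
  have "card (P2n_angles n) \<le> sum ?ord (P2n_angles n)"
    using order_P2n_cis_pos[of n] assms by (subst card_eq_sum) (intro sum_mono, auto)
  then show "4 * real n / 3 - 2 \<le> unimodular_zeros (P2n n)"
    using card_P2n_angles_ge[of n] assms U by linarith
  have split: "P2n_angles n = ?S \<union> ?F" by auto
  have "sum ?ord (P2n_angles n) = sum ?ord ?S + sum ?ord ?F"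
    by (subst split, rule sum.union_disjoint) (use fin in auto)
  also have "\<dots> \<le> sum (\<lambda>_. 1) ?S + sum (\<lambda>_. 2) ?F"
    using order_P2n_cis_le_1_if_steep[of n] order_P2n_cis_le_2_if_flat[of n] assms
    by (intro add_mono sum_mono) (auto simp: P2n_angles_def)
  also have "\<dots> = card ?S + 2 * card ?F" by simp
  finally show "unimodular_zeros (P2n n) \<le> 4 * real n / 3 + 12"
    using card_steep_P2n_angles_le[of n] card_flat_P2n_angles_le[OF assms] assms U by linarith
qed

lemma C_ratio_P2n_approx:
  assumes "n \<ge> 4"
  shows "\<bar>C_ratio (P2n n) - 1/3\<bar> \<le> 6 / real n"
proof -
  have "C_ratio (P2n n) - 1/3 = (4 * n / 3 - unimodular_zeros (P2n n)) / (2 * n)"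
    using assms by (simp add: C_ratio_eq_1_minus_unimodular degree_P2n field_simps)
  then show ?thesis
    using unimodular_zeros_P2n_bounds[OF assms] assms by (simp add: abs_le_iff field_simps)
qed

theorem mainTheorem5:
  shows "(\<lambda>n. C_ratio (P2n n)) \<longlonglongrightarrow> arccos (1/2) / pi
         \<and> arccos (1/2) / pi = 1/3"
proof
  show third: "arccos (1/2) / pi = 1/3" by simp
  have "(\<lambda>n. C_ratio (P2n n) - 1/3) \<longlonglongrightarrow> 0"
  proof (rule Lim_null_comparison)
    show "\<forall>\<^sub>F n in sequentially. norm (C_ratio (P2n n) - 1/3) \<le> 6 / real n"
      using eventually_ge_at_top[of 4] by eventually_elim (simp add: C_ratio_P2n_approx)
  qed (rule lim_const_over_n)
  then show "(\<lambda>n. C_ratio (P2n n)) \<longlonglongrightarrow> arccos (1/2) / pi"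
    unfolding third by (simp add: LIM_zero_iff)
qed

end
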